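(* Let $R$ be a quotient root system with positive roots $R^+$, let $\Phi\subseteq R^+$ be an inversion set, and let $\Phi = \Phi_1 \sqcup \cdots \sqcup \Phi_r$ where $\Phi_1,\dots,\Phi_r$ are non-empty pairwise disjoint inversion sets. Then for each $1 \leq k \leq r$, the set $\Phi_1 \sqcup \cdots \sqcup \Phi_k$ is an inversion set.
   Context: A quotient root system (QRS) $R$ is the set of non-zero images of a root system $\Delta$ (with base $\Sigma$) under the orthogonal projection of its ambient Euclidean space onto $(\mathrm{span}\,J)^\perp$ for some $J\subsetneq\Sigma$; its base consists of the images of $\Sigma\setminus J$, and every root is an integer combination of the base with all coefficients $\ge0$ (positive roots, $R^+$) or all $\le0$. A subset $\Phi\subseteq R^+$ is closed if $\alpha,\beta\in\Phi$ and $\alpha+\beta\in R$ imply $\alpha+\beta\in\Phi$; co-closed if its complement $R^+\setminus\Phi$ is closed; an inversion set if it is both closed and co-closed. *)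

theory Defs
  imports "HOL-Analysis.Analysis"
begin

definition root_system :: "'a::euclidean_space set \<Rightarrow> bool" where
  "root_system \<Delta> \<longleftrightarrow>
     finite \<Delta> \<and> 0 \<notin> \<Delta> \<and> span \<Delta> = UNIV \<and>
     (\<forall>\<alpha>\<in>\<Delta>. \<forall>\<beta>\<in>\<Delta>. \<beta> - (2 * (\<beta> \<bullet> \<alpha>) / (\<alpha> \<bullet> \<alpha>)) *\<^sub>R \<alpha> \<in> \<Delta>) \<and>
     (\<forall>\<alpha>\<in>\<Delta>. \<forall>\<beta>\<in>\<Delta>. 2 * (\<beta> \<bullet> \<alpha>) / (\<alpha> \<bullet> \<alpha>) \<in> \<int>) \<and>
     (\<forall>\<alpha>\<in>\<Delta>. \<forall>c::real. c *\<^sub>R \<alpha> \<in> \<Delta> \<longrightarrow> c = 1 \<or> c = -1)"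

definition root_base :: "'a::euclidean_space set \<Rightarrow> 'a set \<Rightarrow> bool" where
  "root_base \<Delta> \<Sigma> \<longleftrightarrow>
     \<Sigma> \<subseteq> \<Delta> \<and> independent \<Sigma> \<and>
     (\<forall>\<beta>\<in>\<Delta>. \<exists>c::'a \<Rightarrow> int. \<beta> = (\<Sum>\<sigma>\<in>\<Sigma>. of_int (c \<sigma>) *\<^sub>R \<sigma>) \<and>
        ((\<forall>\<sigma>\<in>\<Sigma>. c \<sigma> \<ge> 0) \<or> (\<forall>\<sigma>\<in>\<Sigma>. c \<sigma> \<le> 0)))"

definition perp_proj :: "'a::euclidean_space set \<Rightarrow> 'a \<Rightarrow> 'a" where
  "perp_proj J x = (THE y. (\<forall>u\<in>span J. y \<bullet> u = 0) \<and> x - y \<in> span J)"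

definition qrs_roots :: "'a::euclidean_space set \<Rightarrow> 'a set \<Rightarrow> 'a set" where
  "qrs_roots \<Delta> J = {perp_proj J \<beta> | \<beta>. \<beta> \<in> \<Delta> \<and> perp_proj J \<beta> \<noteq> 0}"

definition qrs_pos :: "'a::euclidean_space set \<Rightarrow> 'a set \<Rightarrow> 'a set \<Rightarrow> 'a set" where
  "qrs_pos \<Delta> \<Sigma> J = {\<gamma> \<in> qrs_roots \<Delta> J. \<exists>c::'a \<Rightarrow> int.
      \<gamma> = (\<Sum>\<sigma>\<in>\<Sigma> - J. of_int (c \<sigma>) *\<^sub>R perp_proj J \<sigma>) \<and> (\<forall>\<sigma>\<in>\<Sigma> - J. c \<sigma> \<ge> 0)}"

definition closed_in_roots :: "'a::euclidean_space set \<Rightarrow> 'a set \<Rightarrow> bool" where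
  "closed_in_roots R \<Phi> \<longleftrightarrow> (\<forall>\<alpha>\<in>\<Phi>. \<forall>\<beta>\<in>\<Phi>. \<alpha> + \<beta> \<in> R \<longrightarrow> \<alpha> + \<beta> \<in> \<Phi>)"

definition inversion_set :: "'a::euclidean_space set \<Rightarrow> 'a set \<Rightarrow> 'a set \<Rightarrow> bool" where
  "inversion_set R Rp \<Phi> \<longleftrightarrow> \<Phi> \<subseteq> Rp \<and> closed_in_roots R \<Phi> \<and> closed_in_roots R (Rp - \<Phi>)"

end

theory Submission
  imports Defs
begin

text \<open>The complement of the first \<open>k\<close> pieces is an intersection of the closed sets
  \<open>R\<^sup>+ - \<Phi>\<^sub>i\<close> with the closed set \<open>R\<^sup>+\<close>. For closedness of the first \<open>k\<close> pieces, let
  \<open>\<alpha> \<in> \<Phi>\<^sub>i\<close>, \<open>\<beta> \<in> \<Phi>\<^sub>j\<close> with \<open>\<alpha> + \<beta>\<close> a root; then \<open>\<alpha> + \<beta> \<in> \<Phi>\<^sub>m\<close> for some \<open>m\<close> since \<open>\<Phi>\<close> is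
  closed, and \<open>m \<notin> {i, j}\<close> is impossible because \<open>\<alpha>, \<beta>\<close> would then lie in the closed set
  \<open>R\<^sup>+ - \<Phi>\<^sub>m\<close>. Only the shape of \<open>R\<^sup>+\<close> as the nonnegative integer combinations of the base
  enters.\<close>

lemma closed_in_roots_qrs_pos: "closed_in_roots (qrs_roots \<Delta> J) (qrs_pos \<Delta> \<Sigma> J)"
  unfolding closed_in_roots_def
proof (intro ballI impI)
  fix \<alpha> \<beta> assume "\<alpha> \<in> qrs_pos \<Delta> \<Sigma> J" "\<beta> \<in> qrs_pos \<Delta> \<Sigma> J" and root: "\<alpha> + \<beta> \<in> qrs_roots \<Delta> J"
  then obtain c d where
    c: "\<alpha> = (\<Sum>\<sigma>\<in>\<Sigma> - J. of_int (c \<sigma>) *\<^sub>R perp_proj J \<sigma>)" "\<forall>\<sigma>\<in>\<Sigma> - J. c \<sigma> \<ge> 0" and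
    d: "\<beta> = (\<Sum>\<sigma>\<in>\<Sigma> - J. of_int (d \<sigma>) *\<^sub>R perp_proj J \<sigma>)" "\<forall>\<sigma>\<in>\<Sigma> - J. d \<sigma> \<ge> 0"
    unfolding qrs_pos_def by blast
  have "\<alpha> + \<beta> = (\<Sum>\<sigma>\<in>\<Sigma> - J. of_int (c \<sigma> + d \<sigma>) *\<^sub>R perp_proj J \<sigma>)"
    unfolding c d by (simp add: sum.distrib[symmetric] scaleR_add_left)
  moreover have "\<forall>\<sigma>\<in>\<Sigma> - J. c \<sigma> + d \<sigma> \<ge> 0" using c d by auto
  ultimately have "\<exists>e::'a \<Rightarrow> int. \<alpha> + \<beta> = (\<Sum>\<sigma>\<in>\<Sigma> - J. of_int (e \<sigma>) *\<^sub>R perp_proj J \<sigma>) \<and> (\<forall>\<sigma>\<in>\<Sigma> - J. e \<sigma> \<ge> 0)"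
    by (intro exI[of _ "\<lambda>\<sigma>. c \<sigma> + d \<sigma>"] conjI)
  with root show "\<alpha> + \<beta> \<in> qrs_pos \<Delta> \<Sigma> J" unfolding qrs_pos_def by blast
qed

lemma closed_in_roots_diff_Union:
  assumes "closed_in_roots R A" and "\<forall>i\<in>K. closed_in_roots R (A - Ps i)"
  shows "closed_in_roots R (A - (\<Union>i\<in>K. Ps i))"
  unfolding closed_in_roots_def
proof (intro ballI impI)
  fix \<alpha> \<beta> assume \<alpha>: "\<alpha> \<in> A - (\<Union>i\<in>K. Ps i)" and \<beta>: "\<beta> \<in> A - (\<Union>i\<in>K. Ps i)" and root: "\<alpha> + \<beta> \<in> R"
  have "\<alpha> + \<beta> \<in> A - Ps i" if "i \<in> K" for i
    using assms(2) that \<alpha> \<beta> root unfolding closed_in_roots_def by blast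
  moreover have "\<alpha> + \<beta> \<in> A"
    using assms(1) \<alpha> \<beta> root unfolding closed_in_roots_def by blast
  ultimately show "\<alpha> + \<beta> \<in> A - (\<Union>i\<in>K. Ps i)" by blast
qed

lemma closed_in_roots_Union_subfamily:
  assumes co_closed: "\<forall>i\<in>I. Ps i \<subseteq> A \<and> closed_in_roots R (A - Ps i)"
    and disjoint: "disjoint_family_on Ps I"
    and closed: "closed_in_roots R (\<Union>i\<in>I. Ps i)"
    and "K \<subseteq> I"
  shows "closed_in_roots R (\<Union>i\<in>K. Ps i)"
  unfolding closed_in_roots_def
proof (intro ballI impI)
  fix \<alpha> \<beta> assume "\<alpha> \<in> (\<Union>i\<in>K. Ps i)" "\<beta> \<in> (\<Union>i\<in>K. Ps i)" and root: "\<alpha> + \<beta> \<in> R"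
  then obtain i j where i: "i \<in> K" "\<alpha> \<in> Ps i" and j: "j \<in> K" "\<beta> \<in> Ps j" by blast
  with \<open>K \<subseteq> I\<close> have "i \<in> I" "j \<in> I" by auto
  with i j root closed obtain m where m: "m \<in> I" "\<alpha> + \<beta> \<in> Ps m"
    unfolding closed_in_roots_def by blast
  have "m = i \<or> m = j"
  proof (rule ccontr)
    assume "\<not> (m = i \<or> m = j)"
    with disjoint \<open>i \<in> I\<close> \<open>j \<in> I\<close> \<open>m \<in> I\<close> have "Ps i \<inter> Ps m = {}" "Ps j \<inter> Ps m = {}"
      unfolding disjoint_family_on_def by auto
    with i j co_closed \<open>i \<in> I\<close> \<open>j \<in> I\<close> have "\<alpha> \<in> A - Ps m" "\<beta> \<in> A - Ps m" by auto
    with co_closed \<open>m \<in> I\<close> root have "\<alpha> + \<beta> \<in> A - Ps m"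
      unfolding closed_in_roots_def by blast
    with m show False by blast
  qed
  with i j m show "\<alpha> + \<beta> \<in> (\<Union>i\<in>K. Ps i)" by blast
qed

lemma inversion_set_Union_subfamily:
  assumes "closed_in_roots R Rp"
    and "\<forall>i\<in>I. inversion_set R Rp (Ps i)"
    and "disjoint_family_on Ps I"
    and "closed_in_roots R (\<Union>i\<in>I. Ps i)"
    and "K \<subseteq> I"
  shows "inversion_set R Rp (\<Union>i\<in>K. Ps i)"
proof -
  have pieces: "\<forall>i\<in>I. Ps i \<subseteq> Rp \<and> closed_in_roots R (Rp - Ps i)"
    using assms(2) unfolding inversion_set_def by simp
  then have "(\<Union>i\<in>K. Ps i) \<subseteq> Rp"
    using \<open>K \<subseteq> I\<close> by auto
  moreover have "closed_in_roots R (\<Union>i\<in>K. Ps i)"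
    using closed_in_roots_Union_subfamily[OF pieces assms(3,4,5)] .
  moreover have "\<forall>i\<in>K. closed_in_roots R (Rp - Ps i)"
    using pieces \<open>K \<subseteq> I\<close> by auto
  then have "closed_in_roots R (Rp - (\<Union>i\<in>K. Ps i))"
    by (rule closed_in_roots_diff_Union[OF assms(1)])
  ultimately show ?thesis unfolding inversion_set_def by simp
qed

theorem proposition1p7:
  fixes \<Delta> \<Sigma> J :: "'a::euclidean_space set"
    and \<Phi> :: "'a set" and Ps :: "nat \<Rightarrow> 'a set" and r :: nat
  assumes "root_system \<Delta>" and "root_base \<Delta> \<Sigma>" and "J \<subset> \<Sigma>"
    and "inversion_set (qrs_roots \<Delta> J) (qrs_pos \<Delta> \<Sigma> J) \<Phi>"
    and "\<forall>i\<in>{1..r}. Ps i \<noteq> {} \<and> inversion_set (qrs_roots \<Delta> J) (qrs_pos \<Delta> \<Sigma> J) (Ps i)"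
    and "\<forall>i\<in>{1..r}. \<forall>j\<in>{1..r}. i \<noteq> j \<longrightarrow> Ps i \<inter> Ps j = {}"
    and "\<Phi> = (\<Union>i\<in>{1..r}. Ps i)"
  shows "\<forall>k\<in>{1..r}. inversion_set (qrs_roots \<Delta> J) (qrs_pos \<Delta> \<Sigma> J) (\<Union>i\<in>{1..k}. Ps i)"
proof
  fix k assume "k \<in> {1..r}"
  then have "{1..k} \<subseteq> {1..r}" by auto
  moreover have "disjoint_family_on Ps {1..r}"
    using assms(6) unfolding disjoint_family_on_def by blast
  moreover have "closed_in_roots (qrs_roots \<Delta> J) (\<Union>i\<in>{1..r}. Ps i)"
    using assms(4,7) unfolding inversion_set_def by blast
  moreover have "\<forall>i\<in>{1..r}. inversion_set (qrs_roots \<Delta> J) (qrs_pos \<Delta> \<Sigma> J) (Ps i)"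
    using assms(5) by blast
  ultimately show "inversion_set (qrs_roots \<Delta> J) (qrs_pos \<Delta> \<Sigma> J) (\<Union>i\<in>{1..k}. Ps i)"
    using inversion_set_Union_subfamily[OF closed_in_roots_qrs_pos] by blast
qed

end
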